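(* Let $(X,\mathsf{d}_X)$ be a compact metric space, $\mathfrak{A}$ a finite-dimensional C*-algebra, and $\mu$ a state of $C(X,\mathfrak{A})$. Let $\|\cdot\|_{\mathsf{n}}$ and $\|\cdot\|_{\mathsf{m}}$ be norms on $\mathfrak{A}$ (over $\mathbb{R}$ or $\mathbb{C}$) and $q,p\in\{C(X),\mathbb{C},\mu\}$. Then the seminorms $\mathsf{L}^{(\mathsf{n}),q}_{\mathsf{d}_X}$ and $\mathsf{L}^{(\mathsf{m}),p}_{\mathsf{d}_X}$ are equivalent on the self-adjoint part of $C(X,\mathfrak{A})$, i.e. there exist $c,C>0$ with $c\,\mathsf{L}^{(\mathsf{n}),q}_{\mathsf{d}_X}(a)\le\mathsf{L}^{(\mathsf{m}),p}_{\mathsf{d}_X}(a)\le C\,\mathsf{L}^{(\mathsf{n}),q}_{\mathsf{d}_X}(a)$ for all self-adjoint $a$. Furthermore, the map $\mathfrak{c}_X:C(X)\to C(X,\mathbb{C}1_{\mathfrak{A}})$, $\mathfrak{c}_X(f)(x)=f(x)1_{\mathfrak{A}}$, is bi-Lipschitz with respect to $\mathsf{L}_{\mathsf{d}_X}$ and any $\mathsf{L}^{(\mathsf{n}),q}_{\mathsf{d}_X}$: there exist $c',C'>0$ with $c'\mathsf{L}_{\mathsf{d}_X}(f)\le\mathsf{L}^{(\mathsf{n}),q}_{\mathsf{d}_X}(\mathfrak{c}_X(f))\le C'\mathsf{L}_{\mathsf{d}_X}(f)$ for all real-valued $f\in C(X)$.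
   Context: $C(X,\mathfrak{A})$: continuous $\mathfrak{A}$-valued functions, pointwise operations, supremum norm; $C(X,\mathbb{C}1_{\mathfrak{A}})$ the $\mathbb{C}1_{\mathfrak{A}}$-valued ones. For a norm $\|\cdot\|_{\mathsf{n}}$ on $\mathfrak{A}$: $l^{(\mathsf{n})}_{\mathsf{d}_X}(a)=\sup_{x\ne y}\|a(x)-a(y)\|_{\mathsf{n}}/\mathsf{d}_X(x,y)$; $\mathsf{L}^{(\mathsf{n}),C(X)}_{\mathsf{d}_X}(a)=\max\{l^{(\mathsf{n})}_{\mathsf{d}_X}(a),\inf_{b\in C(X,\mathbb{C}1_{\mathfrak{A}})}\|a-b\|\}$, $\mathsf{L}^{(\mathsf{n}),\mathbb{C}}_{\mathsf{d}_X}(a)=\max\{l^{(\mathsf{n})}_{\mathsf{d}_X}(a),\inf_{\lambda\in\mathbb{C}}\|a-\lambda1\|\}$, $\mathsf{L}^{(\mathsf{n}),\mu}_{\mathsf{d}_X}(a)=\max\{l^{(\mathsf{n})}_{\mathsf{d}_X}(a),\|a-\mu(a)1\|\}$ (supremum norms). $\mathsf{L}_{\mathsf{d}_X}(f)=\sup_{x\ne y}|f(x)-f(y)|/\mathsf{d}_X(x,y)$. *)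

theory Defs
  imports "HOL-Analysis.Analysis"
begin

text \<open>A finite-dimensional (necessarily unital) C*-algebra: the carrier is a type of class
  real_normed_algebra_1 (its norm is the C*-norm, norm 1 = 1), together with a complex scalar
  multiplication csm extending the real one and an involution st.\<close>

definition fd_cstar_algebra :: "(complex \<Rightarrow> 'a::real_normed_algebra_1 \<Rightarrow> 'a) \<Rightarrow> ('a \<Rightarrow> 'a) \<Rightarrow> bool" where
  "fd_cstar_algebra csm st \<longleftrightarrow>
     (\<forall>r x. csm (complex_of_real r) x = scaleR r x) \<and>
     (\<forall>c d x. csm (c * d) x = csm c (csm d x)) \<and>
     (\<forall>c d x. csm (c + d) x = csm c x + csm d x) \<and>
     (\<forall>c x y. csm c (x + y) = csm c x + csm c y) \<and>
     (\<forall>c x y. csm c (x * y) = csm c x * y) \<and>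
     (\<forall>c x y. csm c (x * y) = x * csm c y) \<and>
     (\<forall>c x. norm (csm c x) = cmod c * norm x) \<and>
     (\<forall>x. st (st x) = x) \<and>
     (\<forall>x y. st (x + y) = st x + st y) \<and>
     (\<forall>c x. st (csm c x) = csm (cnj c) (st x)) \<and>
     (\<forall>x y. st (x * y) = st y * st x) \<and>
     (\<forall>x. norm (st x * x) = (norm x)\<^sup>2) \<and>
     (\<exists>B. finite B \<and> (\<forall>x. \<exists>u. x = (\<Sum>b\<in>B. csm (u b) b)))"

text \<open>A norm on the algebra viewed as a real vector space (complex norms are in particular real norms).\<close>
definition is_norm_on :: "('a::real_vector \<Rightarrow> real) \<Rightarrow> bool" where
  "is_norm_on n \<longleftrightarrow> (\<forall>x. 0 \<le> n x) \<and> (\<forall>x. n x = 0 \<longleftrightarrow> x = 0) \<and>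
     (\<forall>x y. n (x + y) \<le> n x + n y) \<and> (\<forall>r x. n (scaleR r x) = \<bar>r\<bar> * n x)"

text \<open>Elements of C(X,A): continuous functions on X (values outside X are irrelevant).\<close>
definition CXA :: "'x::metric_space set \<Rightarrow> ('x \<Rightarrow> 'a::real_normed_vector) set" where
  "CXA X = {a. continuous_on X a}"

definition self_adjoint_fun :: "'x set \<Rightarrow> ('a \<Rightarrow> 'a) \<Rightarrow> ('x \<Rightarrow> 'a) \<Rightarrow> bool" where
  "self_adjoint_fun X st a \<longleftrightarrow> (\<forall>x\<in>X. st (a x) = a x)"

definition is_state :: "'x::metric_space set \<Rightarrow> (complex \<Rightarrow> 'a::real_normed_algebra_1 \<Rightarrow> 'a) \<Rightarrow> ('a \<Rightarrow> 'a)
     \<Rightarrow> (('x \<Rightarrow> 'a) \<Rightarrow> complex) \<Rightarrow> bool" where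
  "is_state X csm st \<mu> \<longleftrightarrow>
     (\<forall>a\<in>CXA X. \<forall>b\<in>CXA X. (\<forall>x\<in>X. a x = b x) \<longrightarrow> \<mu> a = \<mu> b) \<and>
     (\<forall>a\<in>CXA X. \<forall>b\<in>CXA X. \<mu> (\<lambda>x. a x + b x) = \<mu> a + \<mu> b) \<and>
     (\<forall>a\<in>CXA X. \<forall>c. \<mu> (\<lambda>x. csm c (a x)) = c * \<mu> a) \<and>
     (\<forall>a\<in>CXA X. Im (\<mu> (\<lambda>x. st (a x) * a x)) = 0 \<and> Re (\<mu> (\<lambda>x. st (a x) * a x)) \<ge> 0) \<and>
     \<mu> (\<lambda>x. 1) = 1"

definition supnorm :: "'x set \<Rightarrow> ('x \<Rightarrow> 'a::real_normed_vector) \<Rightarrow> ennreal" where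
  "supnorm X a = (SUP x\<in>X. ennreal (norm (a x)))"

text \<open>l^(n)_{d_X}(a), with the convention sup \<emptyset> = 0, valued in [0,\<infinity>].\<close>
definition lip_n :: "'x::metric_space set \<Rightarrow> ('a::real_vector \<Rightarrow> real) \<Rightarrow> ('x \<Rightarrow> 'a) \<Rightarrow> ennreal" where
  "lip_n X n a = (SUP (x, y)\<in>{(x, y). x \<in> X \<and> y \<in> X \<and> x \<noteq> y}. ennreal (n (a x - a y) / dist x y))"

definition lip_scalar :: "'x::metric_space set \<Rightarrow> ('x \<Rightarrow> complex) \<Rightarrow> ennreal" where
  "lip_scalar X f = (SUP (x, y)\<in>{(x, y). x \<in> X \<and> y \<in> X \<and> x \<noteq> y}. ennreal (cmod (f x - f y) / dist x y))"

datatype qchoice = Q_CX | Q_C | Q_mu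

definition CX_scalar :: "'x::metric_space set \<Rightarrow> (complex \<Rightarrow> 'a::real_normed_algebra_1 \<Rightarrow> 'a) \<Rightarrow> ('x \<Rightarrow> 'a) set" where
  "CX_scalar X csm = {b \<in> CXA X. \<forall>x\<in>X. b x \<in> range (\<lambda>z. csm z 1)}"

definition Lq :: "'x::metric_space set \<Rightarrow> (complex \<Rightarrow> 'a::real_normed_algebra_1 \<Rightarrow> 'a)
     \<Rightarrow> (('x \<Rightarrow> 'a) \<Rightarrow> complex) \<Rightarrow> ('a \<Rightarrow> real) \<Rightarrow> qchoice \<Rightarrow> ('x \<Rightarrow> 'a) \<Rightarrow> ennreal" where
  "Lq X csm \<mu> n q a = max (lip_n X n a)
     (case q of
        Q_CX \<Rightarrow> (INF b\<in>CX_scalar X csm. supnorm X (\<lambda>x. a x - b x))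
      | Q_C \<Rightarrow> (INF z. supnorm X (\<lambda>x. a x - csm z 1))
      | Q_mu \<Rightarrow> supnorm X (\<lambda>x. a x - csm (\<mu> a) 1))"

definition cmap :: "(complex \<Rightarrow> 'a \<Rightarrow> 'a) \<Rightarrow> ('x \<Rightarrow> complex) \<Rightarrow> 'x \<Rightarrow> 'a::real_normed_algebra_1" where
  "cmap csm f x = csm (f x) 1"

end

theory Submission
  imports Defs
begin

text \<open>All norms on the finite-dimensional algebra are equivalent, so the Lipschitz parts of
  the two seminorms are comparable. For the second parts, the distance of a to C(X,\<complex>1) is at most
  its distance to \<complex>1, which is at most its distance to \<mu>(a)1; conversely, if a is uniformly close
  to a scalar function b, pick x0 with b(x0) = z1: then a is uniformly close to z1 up to
  l(a) diam X, and since a state is bounded, \<mu>(a) is close to z. Boundedness of \<mu> comes from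
  positivity: by polarization every s is a combination of four elements t*t, and on f t*t
  with f a continuous real weight the state is controlled by the sup of f. Finally c_X(f) has
  distance 0 to C(X,\<complex>1) and l(c_X f) = n(1) L(f).\<close>

section \<open>Norms on finite-dimensional real vector spaces\<close>

lemma norm_on_nonneg: "is_norm_on N \<Longrightarrow> 0 \<le> N x"
  unfolding is_norm_on_def by auto

lemma norm_on_eq_zero_iff: "is_norm_on N \<Longrightarrow> N x = 0 \<longleftrightarrow> x = 0"
  unfolding is_norm_on_def by auto

lemma norm_on_zero: "is_norm_on N \<Longrightarrow> N 0 = 0"
  unfolding is_norm_on_def by auto

lemma norm_on_triangle: "is_norm_on N \<Longrightarrow> N (x + y) \<le> N x + N y"
  unfolding is_norm_on_def by auto

lemma norm_on_scaleR: "is_norm_on N \<Longrightarrow> N (r *\<^sub>R x) = \<bar>r\<bar> * N x"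
  unfolding is_norm_on_def by auto

lemma norm_on_minus_commute: "is_norm_on N \<Longrightarrow> N (x - y) = N (y - x)"
  using norm_on_scaleR[of N "-1" "y - x"] by simp

lemma norm_on_diff_le: "is_norm_on N \<Longrightarrow> N (x - y) \<le> N x + N y"
  using norm_on_triangle[of N x "-y"] norm_on_scaleR[of N "-1" y] by simp

lemma norm_on_triangle_diff: "is_norm_on N \<Longrightarrow> N (x - z) \<le> N (x - y) + N (y - z)"
  using norm_on_triangle[of N "x - y" "y - z"] by simp

lemma norm_on_sum_le: "is_norm_on N \<Longrightarrow> N (\<Sum>s\<in>S. f s) \<le> (\<Sum>s\<in>S. N (f s))"
proof (induction S rule: infinite_finite_induct)
  case (insert x F)
  then show ?case using norm_on_triangle[of N "f x" "sum f F"] by simp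
qed (simp_all add: norm_on_zero)

lemma is_norm_on_norm: "is_norm_on norm"
  unfolding is_norm_on_def by (auto simp: norm_triangle_ineq)

lemma Cauchy_if_dist_le_null_sum:
  fixes x :: "nat \<Rightarrow> 'a::metric_space"
  assumes le: "\<And>j l. dist (x j) (x l) \<le> e j + e l" and e: "e \<longlonglongrightarrow> 0"
  shows "Cauchy x"
proof (rule metric_CauchyI)
  fix \<epsilon> :: real assume "\<epsilon> > 0"
  then have "\<forall>\<^sub>F j in sequentially. e j < \<epsilon> / 2" using e by (intro order_tendstoD) auto
  then obtain M where M: "\<And>j. j \<ge> M \<Longrightarrow> e j < \<epsilon> / 2" by (auto simp: eventually_sequentially)
  show "\<exists>M. \<forall>j\<ge>M. \<forall>l\<ge>M. dist (x j) (x l) < \<epsilon>"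
  proof (intro exI[of _ M] allI impI)
    fix j l assume "j \<ge> M" "l \<ge> M"
    then show "dist (x j) (x l) < \<epsilon>" using le[of j l] M[of j] M[of l] by linarith
  qed
qed

lemma norm_on_combination_limit:
  fixes N :: "'a::real_vector \<Rightarrow> real"
  assumes N: "is_norm_on N" and fin: "finite S"
    and coeff: "\<And>s. s \<in> S \<Longrightarrow> (\<lambda>j. w j s) \<longlonglongrightarrow> v s"
    and close: "(\<lambda>j. N (b - (\<Sum>s\<in>S. w j s *\<^sub>R s))) \<longlonglongrightarrow> 0"
  shows "b = (\<Sum>s\<in>S. v s *\<^sub>R s)"
proof -
  define err where "err j = N (b - (\<Sum>s\<in>S. w j s *\<^sub>R s)) + (\<Sum>s\<in>S. \<bar>w j s - v s\<bar> * N s)" for j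
  have "(\<lambda>j. \<bar>w j s - v s\<bar> * N s) \<longlonglongrightarrow> 0" if "s \<in> S" for s
    using coeff[OF that] by (intro tendsto_mult_left_zero tendsto_rabs_zero) (simp add: LIM_zero)
  then have "err \<longlonglongrightarrow> 0 + (\<Sum>s\<in>S. 0)"
    unfolding err_def by (intro tendsto_add close tendsto_sum)
  moreover have "N (b - (\<Sum>s\<in>S. v s *\<^sub>R s)) \<le> err j" for j
  proof -
    have "N (b - (\<Sum>s\<in>S. v s *\<^sub>R s))
        \<le> N (b - (\<Sum>s\<in>S. w j s *\<^sub>R s)) + N (\<Sum>s\<in>S. (w j s - v s) *\<^sub>R s)"
      using norm_on_triangle_diff[OF N, of b "\<Sum>s\<in>S. v s *\<^sub>R s" "\<Sum>s\<in>S. w j s *\<^sub>R s"]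
      by (simp only: scaleR_diff_left sum_subtractf)
    also have "N (\<Sum>s\<in>S. (w j s - v s) *\<^sub>R s) \<le> (\<Sum>s\<in>S. N ((w j s - v s) *\<^sub>R s))"
      by (rule norm_on_sum_le[OF N])
    also have "\<dots> = (\<Sum>s\<in>S. \<bar>w j s - v s\<bar> * N s)"
      by (simp add: norm_on_scaleR[OF N])
    finally show ?thesis unfolding err_def by linarith
  qed
  ultimately have "N (b - (\<Sum>s\<in>S. v s *\<^sub>R s)) \<le> 0"
    by (intro tendsto_le[OF _ _ tendsto_const]) (auto intro: always_eventually)
  then show ?thesis
    using norm_on_nonneg[OF N] norm_on_eq_zero_iff[OF N] by (metis antisym eq_iff_diff_eq_0)
qed

text \<open>Otherwise combinations of S approach b; the coefficient bound on S makes their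
  coefficients Cauchy, and the limiting combination equals b.\<close>

lemma norm_on_dist_span_pos:
  fixes N :: "'a::real_vector \<Rightarrow> real"
  assumes N: "is_norm_on N" and fin: "finite S" and b: "b \<notin> span S" and "C \<ge> 0"
    and coord: "\<And>u. (\<Sum>s\<in>S. \<bar>u s\<bar>) \<le> C * N (\<Sum>s\<in>S. u s *\<^sub>R s)"
  shows "\<exists>d>0. \<forall>w. d \<le> N (b - (\<Sum>s\<in>S. w s *\<^sub>R s))"
proof (rule ccontr)
  define W where "W w = (\<Sum>s\<in>S. w s *\<^sub>R s)" for w
  assume "\<not> ?thesis"
  then have "\<forall>j::nat. \<exists>w. N (b - W w) < 1 / Suc j" unfolding W_def by (auto simp: not_le)
  then obtain w where w: "\<And>j. N (b - W (w j)) < 1 / Suc j" by metis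
  have null: "(\<lambda>j. C * (1 / Suc j)) \<longlonglongrightarrow> 0"
    using LIMSEQ_inverse_real_of_nat by (intro tendsto_mult_right_zero) (simp add: inverse_eq_divide)
  have "Cauchy (\<lambda>j. w j s)" if s: "s \<in> S" for s
  proof (rule Cauchy_if_dist_le_null_sum[OF _ null])
    fix j l
    have "\<bar>w j s - w l s\<bar> \<le> (\<Sum>s\<in>S. \<bar>w j s - w l s\<bar>)"
      using s fin by (intro member_le_sum) auto
    also have "\<dots> \<le> C * N (W (w j) - W (w l))"
      using coord[of "\<lambda>s. w j s - w l s"] unfolding W_def by (simp add: scaleR_diff_left sum_subtractf)
    also have "\<dots> \<le> C * (1 / Suc j + 1 / Suc l)"
    proof (rule mult_left_mono[OF _ \<open>C \<ge> 0\<close>])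
      have "N (W (w j) - W (w l)) \<le> N (W (w j) - b) + N (b - W (w l))"
        by (rule norm_on_triangle_diff[OF N])
      then show "N (W (w j) - W (w l)) \<le> 1 / Suc j + 1 / Suc l"
        using w[of j] w[of l] norm_on_minus_commute[OF N, of "W (w j)" b] by linarith
    qed
    finally show "dist (w j s) (w l s) \<le> C * (1 / Suc j) + C * (1 / Suc l)"
      by (simp add: dist_real_def distrib_left)
  qed
  then have "\<forall>s\<in>S. \<exists>L. (\<lambda>j. w j s) \<longlonglongrightarrow> L"
    using Cauchy_convergent_iff convergent_def by blast
  then obtain v where "\<And>s. s \<in> S \<Longrightarrow> (\<lambda>j. w j s) \<longlonglongrightarrow> v s"
    by metis
  moreover have "(\<lambda>j. N (b - W (w j))) \<longlonglongrightarrow> 0"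
  proof (rule real_tendsto_sandwich[of "\<lambda>_. 0" _ _ "\<lambda>j. 1 / Suc j"])
    show "(\<lambda>j. 1 / real (Suc j)) \<longlonglongrightarrow> 0"
      using LIMSEQ_inverse_real_of_nat by (simp add: inverse_eq_divide)
  qed (use w norm_on_nonneg[OF N] in \<open>auto intro!: always_eventually less_imp_le\<close>)
  ultimately have "b = W v"
    unfolding W_def by (rule norm_on_combination_limit[OF N fin])
  moreover have "W v \<in> span S" unfolding W_def by (intro span_sum span_scale span_base)
  ultimately show False using b by simp
qed

lemma norm_on_scaled_dist_le:
  fixes N :: "'a::real_vector \<Rightarrow> real"
  assumes N: "is_norm_on N" and d: "\<And>w. d \<le> N (b - (\<Sum>s\<in>S. w s *\<^sub>R s))"
  shows "\<bar>c\<bar> * d \<le> N (c *\<^sub>R b + (\<Sum>s\<in>S. u s *\<^sub>R s))"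
proof (cases "c = 0")
  case True
  then show ?thesis using norm_on_nonneg[OF N] by simp
next
  case False
  then have "c *\<^sub>R b + (\<Sum>s\<in>S. u s *\<^sub>R s) = c *\<^sub>R (b - (\<Sum>s\<in>S. (- u s / c) *\<^sub>R s))"
    by (simp add: scaleR_right_diff_distrib scaleR_sum_right sum_negf[symmetric])
  then show ?thesis
    using d[of "\<lambda>s. - u s / c"] by (simp add: norm_on_scaleR[OF N] mult_left_mono)
qed

text \<open>Induction over S: by the positive distance from the new vector b to span S, the
  coefficient of b is bounded by the norm, and then so is the remaining combination.\<close>

lemma norm_on_coefficient_bound:
  fixes N :: "'a::real_vector \<Rightarrow> real"
  assumes N: "is_norm_on N" and "finite S" and "independent S"
  shows "\<exists>C\<ge>0. \<forall>u. (\<Sum>s\<in>S. \<bar>u s\<bar>) \<le> C * N (\<Sum>s\<in>S. u s *\<^sub>R s)"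
  using assms(2,3)
proof (induction S rule: finite_induct)
  case (insert b S)
  then have indS: "independent S" and bS: "b \<notin> span S"
    by (auto simp: independent_insert)
  from insert.IH[OF indS] obtain C where C0: "C \<ge> 0"
    and C: "\<And>u. (\<Sum>s\<in>S. \<bar>u s\<bar>) \<le> C * N (\<Sum>s\<in>S. u s *\<^sub>R s)" by blast
  obtain d where d0: "d > 0" and d: "\<And>w. d \<le> N (b - (\<Sum>s\<in>S. w s *\<^sub>R s))"
    using norm_on_dist_span_pos[OF N insert.hyps(1) bS C0 C] by blast
  define K where "K = 1 / d + C + C * N b / d"
  have Nb: "N b \<ge> 0" using norm_on_nonneg[OF N] .
  show ?case
  proof (intro exI[of _ K] conjI allI)
    show "0 \<le> K" unfolding K_def using d0 C0 Nb by simp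
    fix u :: "'a \<Rightarrow> real"
    define x where "x = (\<Sum>s\<in>insert b S. u s *\<^sub>R s)"
    define y where "y = (\<Sum>s\<in>S. u s *\<^sub>R s)"
    have x: "x = u b *\<^sub>R b + y" unfolding x_def y_def using insert.hyps by simp
    have "\<bar>u b\<bar> * d \<le> N x" unfolding x y_def using d by (rule norm_on_scaled_dist_le[OF N])
    then have ub: "\<bar>u b\<bar> \<le> N x / d" using d0 by (simp add: field_simps)
    have "N y \<le> N x + \<bar>u b\<bar> * N b"
      using norm_on_diff_le[OF N, of x "u b *\<^sub>R b"] by (simp add: x norm_on_scaleR[OF N])
    also have "\<dots> \<le> N x + N x / d * N b" using mult_right_mono[OF ub Nb] by simp
    finally have Ny: "N y \<le> N x + N x / d * N b" .
    have "(\<Sum>s\<in>insert b S. \<bar>u s\<bar>) = \<bar>u b\<bar> + (\<Sum>s\<in>S. \<bar>u s\<bar>)" using insert.hyps by simp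
    also have "\<dots> \<le> N x / d + C * N y" using ub C unfolding y_def by (meson add_mono)
    also have "\<dots> \<le> N x / d + C * (N x + N x / d * N b)" using Ny C0 by (simp add: mult_left_mono)
    also have "\<dots> = K * N x" unfolding K_def by (simp add: field_simps)
    finally show "(\<Sum>s\<in>insert b S. \<bar>u s\<bar>) \<le> K * N (\<Sum>s\<in>insert b S. u s *\<^sub>R s)"
      unfolding x_def .
  qed
qed (auto simp: norm_on_zero[OF N])

lemma norm_on_equiv:
  fixes N1 N2 :: "'a::real_vector \<Rightarrow> real" and B :: "'a set"
  assumes fin: "finite B" and ind: "independent B" and sp: "\<And>x. x \<in> span B"
    and N1: "is_norm_on N1" and N2: "is_norm_on N2"
  shows "\<exists>K>0. \<forall>x. N1 x \<le> K * N2 x"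
proof -
  obtain C where C0: "C \<ge> 0" and C: "\<And>u. (\<Sum>s\<in>B. \<bar>u s\<bar>) \<le> C * N2 (\<Sum>s\<in>B. u s *\<^sub>R s)"
    using norm_on_coefficient_bound[OF N2 fin ind] by blast
  define M where "M = (\<Sum>b\<in>B. N1 b)"
  have M0: "M \<ge> 0" unfolding M_def by (intro sum_nonneg norm_on_nonneg[OF N1])
  show ?thesis
  proof (intro exI[of _ "M * C + 1"] conjI allI)
    show "M * C + 1 > 0" using M0 C0 by (simp add: add_nonneg_pos)
    fix x
    define r where "r = representation B x"
    have x: "x = (\<Sum>b\<in>B. r b *\<^sub>R b)"
      unfolding r_def using sum_representation_eq[OF ind sp fin] by simp
    have "N1 x \<le> (\<Sum>b\<in>B. N1 (r b *\<^sub>R b))" by (subst x) (rule norm_on_sum_le[OF N1])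
    also have "\<dots> = (\<Sum>b\<in>B. \<bar>r b\<bar> * N1 b)" by (simp add: norm_on_scaleR[OF N1])
    also have "\<dots> \<le> (\<Sum>b\<in>B. \<bar>r b\<bar> * M)"
      unfolding M_def using fin
      by (intro sum_mono mult_left_mono member_le_sum norm_on_nonneg[OF N1]) auto
    also have "\<dots> = M * (\<Sum>b\<in>B. \<bar>r b\<bar>)" by (simp add: sum_distrib_left mult_ac)
    also have "\<dots> \<le> M * (C * N2 x)"
      using C[of r] x M0 by (simp add: mult_left_mono)
    also have "\<dots> \<le> (M * C + 1) * N2 x" using norm_on_nonneg[OF N2, of x] by (simp add: distrib_right)
    finally show "N1 x \<le> (M * C + 1) * N2 x" .
  qed
qed

lemma bounded_linear_representation:
  fixes B :: "'a::real_normed_vector set"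
  assumes fin: "finite B" and ind: "independent B" and sp: "\<And>x. x \<in> span B"
  shows "bounded_linear (\<lambda>y. representation B y b)"
proof -
  obtain C where "C \<ge> 0" and C: "\<And>u. (\<Sum>s\<in>B. \<bar>u s\<bar>) \<le> C * norm (\<Sum>s\<in>B. u s *\<^sub>R s)"
    using norm_on_coefficient_bound[OF is_norm_on_norm fin ind] by blast
  have "\<bar>representation B y b\<bar> \<le> C * norm y" for y
  proof (cases "b \<in> B")
    case True
    have "\<bar>representation B y b\<bar> \<le> (\<Sum>s\<in>B. \<bar>representation B y s\<bar>)"
      using True fin by (intro member_le_sum) auto
    also have "\<dots> \<le> C * norm y"
      using C[of "representation B y"] sum_representation_eq[OF ind sp fin] by simp
    finally show ?thesis .
  next
    case False
    then have "representation B y b = 0" using representation_ne_zero by blast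
    then show ?thesis using \<open>C \<ge> 0\<close> by simp
  qed
  then show ?thesis
    by (intro bounded_linear_intro[where K=C])
       (auto simp: representation_add[OF ind sp sp] representation_scale[OF ind sp] mult.commute)
qed

section \<open>Finite-dimensional C*-algebras\<close>

locale fd_cstar =
  fixes csm :: "complex \<Rightarrow> 'a::real_normed_algebra_1 \<Rightarrow> 'a" and st :: "'a \<Rightarrow> 'a"
  assumes fd_cstar_algebra: "fd_cstar_algebra csm st"
begin

lemma csm_of_real: "csm (complex_of_real r) x = r *\<^sub>R x"
  using fd_cstar_algebra unfolding fd_cstar_algebra_def by simp

lemma csm_mult: "csm (c * d) x = csm c (csm d x)"
  using fd_cstar_algebra unfolding fd_cstar_algebra_def by simp

lemma csm_add_left: "csm (c + d) x = csm c x + csm d x"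
  using fd_cstar_algebra unfolding fd_cstar_algebra_def by simp

lemma csm_add_right: "csm c (x + y) = csm c x + csm c y"
  using fd_cstar_algebra unfolding fd_cstar_algebra_def by simp

lemma csm_mult_left: "csm c (x * y) = csm c x * y"
  using fd_cstar_algebra unfolding fd_cstar_algebra_def by simp

lemma csm_mult_right: "csm c (x * y) = x * csm c y"
  using fd_cstar_algebra unfolding fd_cstar_algebra_def by metis

lemma norm_csm: "norm (csm c x) = cmod c * norm x"
  using fd_cstar_algebra unfolding fd_cstar_algebra_def by simp

lemma st_st: "st (st x) = x"
  using fd_cstar_algebra unfolding fd_cstar_algebra_def by simp

lemma st_add: "st (x + y) = st x + st y"
  using fd_cstar_algebra unfolding fd_cstar_algebra_def by simp

lemma st_csm: "st (csm c x) = csm (cnj c) (st x)"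
  using fd_cstar_algebra unfolding fd_cstar_algebra_def by simp

lemma st_mult: "st (x * y) = st y * st x"
  using fd_cstar_algebra unfolding fd_cstar_algebra_def by simp

lemma finite_csm_spanning: "\<exists>B. finite B \<and> (\<forall>x. \<exists>u. x = (\<Sum>b\<in>B. csm (u b) b))"
  using fd_cstar_algebra unfolding fd_cstar_algebra_def by blast

lemma csm_zero_left [simp]: "csm 0 x = 0"
  using csm_of_real[of 0 x] by simp

lemma csm_one_left [simp]: "csm 1 x = x"
  using csm_of_real[of 1 x] by simp

lemma csm_minus_left: "csm (- c) x = - csm c x"
  using csm_add_left[of c "-c" x] by (simp add: add_eq_0_iff)

lemma csm_minus_right: "csm c (- x) = - csm c x"
  using csm_add_right[of c x "-x"] csm_mult[of c 0 x] by (simp add: add_eq_0_iff)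

lemma csm_diff_left: "csm (c - d) x = csm c x - csm d x"
  using csm_add_left[of c "-d" x] by (simp add: csm_minus_left)

lemma csm_diff_right: "csm c (x - y) = csm c x - csm c y"
  using csm_add_right[of c x "-y"] by (simp add: csm_minus_right)

lemma csm_scaleR: "csm c (r *\<^sub>R x) = r *\<^sub>R csm c x"
  using csm_mult[of c "complex_of_real r" x] csm_mult[of "complex_of_real r" c x]
  by (simp add: csm_of_real mult.commute)

lemma csm_ii_ii: "csm \<i> (csm \<i> x) = - x"
  using csm_mult[of \<i> \<i> x] csm_minus_left[of 1 x] by simp

lemma st_one [simp]: "st 1 = 1"
  using st_mult[of "st 1" 1] by (simp add: st_st)

lemma st_scaleR: "st (r *\<^sub>R x) = r *\<^sub>R st x"
  using st_csm[of "complex_of_real r" x] by (simp add: csm_of_real)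

lemma norm_csm_one_diff: "norm (csm z 1 - csm w 1) = cmod (z - w)"
  using norm_csm[of "z - w" 1] by (simp add: csm_diff_left)

lemma bounded_linear_csm: "bounded_linear (csm c)"
  by (rule bounded_linear_intro[where K="cmod c"])
     (auto simp: csm_add_right csm_scaleR norm_csm mult.commute)

lemma csm_decompose: "csm z x = Re z *\<^sub>R x + Im z *\<^sub>R csm \<i> x"
proof -
  have "complex_of_real (Re z) + complex_of_real (Im z) * \<i> = z"
    by (simp add: complex_eq_iff)
  then have "csm z x = csm (complex_of_real (Re z) + complex_of_real (Im z) * \<i>) x"
    by simp
  then show ?thesis by (simp only: csm_add_left csm_mult csm_of_real)
qed

lemma finite_real_basis: "\<exists>B::'a set. finite B \<and> independent B \<and> (\<forall>x. x \<in> span B)"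
proof -
  obtain B0 where fin0: "finite B0" and B0: "\<forall>x. \<exists>u. x = (\<Sum>b\<in>B0. csm (u b) b)"
    using finite_csm_spanning by blast
  define T where "T = B0 \<union> csm \<i> ` B0"
  have spanT: "x \<in> span T" for x
  proof -
    obtain u where "x = (\<Sum>b\<in>B0. csm (u b) b)" using B0 by blast
    also have "\<dots> = (\<Sum>b\<in>B0. Re (u b) *\<^sub>R b + Im (u b) *\<^sub>R csm \<i> b)"
      by (rule sum.cong[OF refl csm_decompose])
    also have "\<dots> \<in> span T"
      unfolding T_def by (intro span_sum span_add span_scale span_base) auto
    finally show ?thesis .
  qed
  obtain B where BT: "B \<subseteq> T" and "independent B" and TB: "T \<subseteq> span B"
    using maximal_independent_subset[of T] by blast
  have "finite B" using finite_subset[OF BT] fin0 unfolding T_def by blast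
  moreover have "x \<in> span B" for x
    using spanT[of x] span_mono[OF TB] unfolding span_span by blast
  ultimately show ?thesis using \<open>independent B\<close> by blast
qed

lemma norms_equivalent:
  fixes N1 N2 :: "'a \<Rightarrow> real"
  assumes "is_norm_on N1" and "is_norm_on N2"
  shows "\<exists>K>0. \<forall>x. N1 x \<le> K * N2 x"
proof -
  obtain B :: "'a set" where B: "finite B" "independent B" "\<And>x. x \<in> span B"
    using finite_real_basis by blast
  show ?thesis by (rule norm_on_equiv[OF B assms])
qed

definition shifted_square :: "'a \<Rightarrow> complex \<Rightarrow> 'a" where
  "shifted_square s c = st (s + csm c 1) * (s + csm c 1)"

lemma shifted_square_unimodular:
  assumes "cnj c * c = 1"
  shows "shifted_square s c = st s * s + csm c (st s) + csm (cnj c) s + 1"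
proof -
  have "csm (cnj c) 1 * csm c 1 = 1"
    using csm_mult_left[of "cnj c" 1 "csm c 1"] csm_mult[of "cnj c" c 1] assms by simp
  moreover have "st s * csm c 1 = csm c (st s)" and "csm (cnj c) 1 * s = csm (cnj c) s"
    using csm_mult_right[of c "st s" 1] csm_mult_left[of "cnj c" 1 s] by simp_all
  ultimately show ?thesis
    unfolding shifted_square_def st_add st_csm st_one by (simp add: distrib_left distrib_right add.assoc)
qed

lemma polarization:
  "s = (1/4) *\<^sub>R (shifted_square s 1 - shifted_square s (-1))
     + (1/4) *\<^sub>R csm \<i> (shifted_square s \<i> - shifted_square s (-\<i>))"
proof -
  have "shifted_square s 1 = st s * s + st s + s + 1"
    using shifted_square_unimodular[of 1 s] by simp
  moreover have "shifted_square s (-1) = st s * s - st s - s + 1"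
    using shifted_square_unimodular[of "-1" s] by (simp add: csm_minus_left)
  ultimately have re: "shifted_square s 1 - shifted_square s (-1) = 2 *\<^sub>R st s + 2 *\<^sub>R s"
    by (simp add: algebra_simps scaleR_2)
  have "shifted_square s \<i> = st s * s + csm \<i> (st s) - csm \<i> s + 1"
    using shifted_square_unimodular[of \<i> s] by (simp add: csm_minus_left)
  moreover have "shifted_square s (-\<i>) = st s * s - csm \<i> (st s) + csm \<i> s + 1"
    using shifted_square_unimodular[of "-\<i>" s] by (simp add: csm_minus_left)
  ultimately have "shifted_square s \<i> - shifted_square s (-\<i>) = 2 *\<^sub>R csm \<i> (st s) - 2 *\<^sub>R csm \<i> s"
    by (simp add: algebra_simps scaleR_2)
  then have im: "csm \<i> (shifted_square s \<i> - shifted_square s (-\<i>)) = 2 *\<^sub>R s - 2 *\<^sub>R st s"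
    by (simp add: csm_diff_right csm_scaleR csm_ii_ii)
  show ?thesis
    unfolding re im by (simp add: algebra_simps scaleR_add_left[symmetric])
qed

end

section \<open>States of C(X,A)\<close>

lemma CXA_const [simp]: "(\<lambda>x. v) \<in> CXA X"
  unfolding CXA_def by simp

lemma CXA_add [simp]: "a \<in> CXA X \<Longrightarrow> b \<in> CXA X \<Longrightarrow> (\<lambda>x. a x + b x) \<in> CXA X"
  unfolding CXA_def by (simp add: continuous_on_add)

lemma CXA_minus [simp]: "a \<in> CXA X \<Longrightarrow> (\<lambda>x. - a x) \<in> CXA X"
  unfolding CXA_def by (simp add: continuous_on_minus)

lemma CXA_diff [simp]: "a \<in> CXA X \<Longrightarrow> b \<in> CXA X \<Longrightarrow> (\<lambda>x. a x - b x) \<in> CXA X"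
  unfolding CXA_def by (simp add: continuous_on_diff)

lemma CXA_scaleR [simp]: "continuous_on X g \<Longrightarrow> (\<lambda>x. g x *\<^sub>R v) \<in> CXA X"
  unfolding CXA_def by (simp add: continuous_intros)

lemma CXA_scaleR_left [simp]: "a \<in> CXA X \<Longrightarrow> (\<lambda>x. r *\<^sub>R a x) \<in> CXA X"
  unfolding CXA_def by (simp add: continuous_intros)

lemma CXA_sum: "(\<And>i. i \<in> F \<Longrightarrow> f i \<in> CXA X) \<Longrightarrow> (\<lambda>x. \<Sum>i\<in>F. f i x) \<in> CXA X"
  unfolding CXA_def by (simp add: continuous_on_sum)

lemma (in fd_cstar) CXA_csm [simp]: "a \<in> CXA X \<Longrightarrow> (\<lambda>x. csm c (a x)) \<in> CXA X"
  unfolding CXA_def using bounded_linear.continuous_on[OF bounded_linear_csm] by blast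

locale cx_state = fd_cstar csm st
  for csm :: "complex \<Rightarrow> 'a::real_normed_algebra_1 \<Rightarrow> 'a" and st +
  fixes X :: "'x::metric_space set" and \<mu> :: "('x \<Rightarrow> 'a) \<Rightarrow> complex"
  assumes state: "is_state X csm st \<mu>"
begin

lemma state_cong: "a \<in> CXA X \<Longrightarrow> b \<in> CXA X \<Longrightarrow> (\<And>x. x \<in> X \<Longrightarrow> a x = b x) \<Longrightarrow> \<mu> a = \<mu> b"
  using state unfolding is_state_def by blast

lemma state_add: "a \<in> CXA X \<Longrightarrow> b \<in> CXA X \<Longrightarrow> \<mu> (\<lambda>x. a x + b x) = \<mu> a + \<mu> b"
  using state unfolding is_state_def by blast

lemma state_csm: "a \<in> CXA X \<Longrightarrow> \<mu> (\<lambda>x. csm c (a x)) = c * \<mu> a"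
  using state unfolding is_state_def by blast

lemma state_positive:
  "a \<in> CXA X \<Longrightarrow> Im (\<mu> (\<lambda>x. st (a x) * a x)) = 0 \<and> Re (\<mu> (\<lambda>x. st (a x) * a x)) \<ge> 0"
  using state unfolding is_state_def by blast

lemma state_one: "\<mu> (\<lambda>x. 1) = 1"
  using state unfolding is_state_def by blast

lemma state_zero: "\<mu> (\<lambda>x. 0) = 0"
  using state_csm[of "\<lambda>x. 1" 0] by simp

lemma state_const_scalar: "\<mu> (\<lambda>x. csm z 1) = z"
  using state_csm[of "\<lambda>x. 1" z] state_one by simp

lemma state_scaleR: "a \<in> CXA X \<Longrightarrow> \<mu> (\<lambda>x. r *\<^sub>R a x) = complex_of_real r * \<mu> a"
  using state_csm[of a "complex_of_real r"] by (simp add: csm_of_real)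

lemma state_diff: "a \<in> CXA X \<Longrightarrow> b \<in> CXA X \<Longrightarrow> \<mu> (\<lambda>x. a x - b x) = \<mu> a - \<mu> b"
  using state_add[of a "\<lambda>x. (-1) *\<^sub>R b x"] state_scaleR[of b "-1"] by simp

lemma state_sum:
  "finite F \<Longrightarrow> (\<And>i. i \<in> F \<Longrightarrow> f i \<in> CXA X) \<Longrightarrow> \<mu> (\<lambda>x. \<Sum>i\<in>F. f i x) = (\<Sum>i\<in>F. \<mu> (f i))"
proof (induction F rule: finite_induct)
  case (insert j F)
  then show ?case using state_add[of "f j" "\<lambda>x. \<Sum>i\<in>F. f i x"] CXA_sum[of F f X] by simp
qed (simp add: state_zero)

lemma domain_nonempty: "X \<noteq> {}"
proof
  assume "X = {}"
  then have "\<mu> (\<lambda>x. 1) = \<mu> (\<lambda>x. 0)" by (intro state_cong) auto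
  then show False using state_one state_zero by simp
qed

lemma state_weighted_positive:
  assumes "continuous_on X k" and "\<And>x. k x \<ge> 0"
  shows "Im (\<mu> (\<lambda>x. k x *\<^sub>R (st t * t))) = 0 \<and> Re (\<mu> (\<lambda>x. k x *\<^sub>R (st t * t))) \<ge> 0"
proof -
  define g where "g x = sqrt (k x) *\<^sub>R t" for x
  have "g \<in> CXA X" unfolding g_def using assms(1) by (simp add: continuous_intros)
  moreover have "st (g x) * g x = k x *\<^sub>R (st t * t)" for x
    unfolding g_def st_scaleR using assms(2)[of x] by simp
  ultimately show ?thesis using state_positive[of g] by simp
qed

text \<open>The weights h and max 0 (M - h) give elements of nonnegative state value that add up
  to M t*t.\<close>

lemma state_weighted_le:
  assumes h: "continuous_on X h" and h0: "\<And>x. h x \<ge> 0" and hM: "\<And>x. x \<in> X \<Longrightarrow> h x \<le> M"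
  shows "cmod (\<mu> (\<lambda>x. h x *\<^sub>R (st t * t))) \<le> M * cmod (\<mu> (\<lambda>x. st t * t))"
proof -
  define p where "p = st t * t"
  define h' where "h' x = max 0 (M - h x)" for x
  have h': "continuous_on X h'" unfolding h'_def by (intro continuous_intros h)
  have "M \<ge> 0" using domain_nonempty hM h0 by (metis all_not_in_conv order_trans)
  have "\<mu> (\<lambda>x. h x *\<^sub>R p + h' x *\<^sub>R p) = \<mu> (\<lambda>x. csm (complex_of_real M) p)"
  proof (rule state_cong)
    fix x assume "x \<in> X"
    then have "h x + h' x = M" using hM[of x] unfolding h'_def by simp
    then show "h x *\<^sub>R p + h' x *\<^sub>R p = csm (complex_of_real M) p"
      by (simp add: csm_of_real scaleR_add_left[symmetric])
  qed (use h h' in simp_all)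
  then have sum: "\<mu> (\<lambda>x. h x *\<^sub>R p) + \<mu> (\<lambda>x. h' x *\<^sub>R p) = complex_of_real M * \<mu> (\<lambda>x. p)"
    using state_add[of "\<lambda>x. h x *\<^sub>R p" "\<lambda>x. h' x *\<^sub>R p"] state_csm[of "\<lambda>x. p"] h h' by simp
  have pos: "Im (\<mu> (\<lambda>x. h x *\<^sub>R p)) = 0 \<and> Re (\<mu> (\<lambda>x. h x *\<^sub>R p)) \<ge> 0"
    "Im (\<mu> (\<lambda>x. h' x *\<^sub>R p)) = 0 \<and> Re (\<mu> (\<lambda>x. h' x *\<^sub>R p)) \<ge> 0"
    unfolding p_def using h0 h h' by (auto intro!: state_weighted_positive simp: h'_def)
  have "cmod (\<mu> (\<lambda>x. h x *\<^sub>R p)) = Re (\<mu> (\<lambda>x. h x *\<^sub>R p))" using pos(1) cmod_eq_Re by simp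
  also have "\<dots> \<le> Re (\<mu> (\<lambda>x. h x *\<^sub>R p) + \<mu> (\<lambda>x. h' x *\<^sub>R p))" using pos(2) by simp
  also have "\<dots> = M * Re (\<mu> (\<lambda>x. p))" unfolding sum by simp
  also have "\<dots> \<le> M * cmod (\<mu> (\<lambda>x. p))" using \<open>M \<ge> 0\<close> complex_Re_le_cmod by (simp add: mult_left_mono)
  finally show ?thesis unfolding p_def .
qed

lemma state_real_weighted_le:
  assumes g: "continuous_on X g" and gM: "\<And>x. x \<in> X \<Longrightarrow> \<bar>g x\<bar> \<le> M"
  shows "cmod (\<mu> (\<lambda>x. g x *\<^sub>R (st t * t))) \<le> 2 * M * cmod (\<mu> (\<lambda>x. st t * t))"
proof -
  define p where "p = st t * t"
  define g_pos where "g_pos x = max 0 (g x)" for x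
  define g_neg where "g_neg x = max 0 (- g x)" for x
  have "continuous_on X g_pos" "continuous_on X g_neg"
    unfolding g_pos_def g_neg_def by (intro continuous_intros g)+
  moreover have "g x *\<^sub>R p = g_pos x *\<^sub>R p - g_neg x *\<^sub>R p" for x
    by (simp add: g_pos_def g_neg_def scaleR_diff_left[symmetric] max_def)
  ultimately have "\<mu> (\<lambda>x. g x *\<^sub>R p) = \<mu> (\<lambda>x. g_pos x *\<^sub>R p) - \<mu> (\<lambda>x. g_neg x *\<^sub>R p)"
    using state_diff[of "\<lambda>x. g_pos x *\<^sub>R p" "\<lambda>x. g_neg x *\<^sub>R p"] by simp
  then have "cmod (\<mu> (\<lambda>x. g x *\<^sub>R p)) \<le> cmod (\<mu> (\<lambda>x. g_pos x *\<^sub>R p)) + cmod (\<mu> (\<lambda>x. g_neg x *\<^sub>R p))"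
    by (simp add: norm_triangle_ineq4)
  also have "\<dots> \<le> M * cmod (\<mu> (\<lambda>x. p)) + M * cmod (\<mu> (\<lambda>x. p))"
    unfolding p_def using \<open>continuous_on X g_pos\<close> \<open>continuous_on X g_neg\<close>
    by (intro add_mono state_weighted_le) (auto simp: g_pos_def g_neg_def dest!: gM)
  finally show ?thesis unfolding p_def by simp
qed

lemma state_weighted_bound:
  "\<exists>K\<ge>0. \<forall>(g :: 'x \<Rightarrow> real) M. continuous_on X g \<longrightarrow> (\<forall>x\<in>X. \<bar>g x\<bar> \<le> M) \<longrightarrow>
     cmod (\<mu> (\<lambda>x. g x *\<^sub>R s)) \<le> M * K"
proof -
  define K where "K = (1/2) * (cmod (\<mu> (\<lambda>x. shifted_square s 1)) + cmod (\<mu> (\<lambda>x. shifted_square s (-1)))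
    + cmod (\<mu> (\<lambda>x. shifted_square s \<i>)) + cmod (\<mu> (\<lambda>x. shifted_square s (-\<i>))))"
  have "cmod (\<mu> (\<lambda>x. g x *\<^sub>R s)) \<le> M * K"
    if g: "continuous_on X g" and gM: "\<forall>x\<in>X. \<bar>g x\<bar> \<le> M" for g :: "'x \<Rightarrow> real" and M
  proof -
    define F where "F c x = g x *\<^sub>R shifted_square s c" for c x
    have F: "F c \<in> CXA X" for c unfolding F_def using g by simp
    have FB: "cmod (\<mu> (F c)) \<le> 2 * M * cmod (\<mu> (\<lambda>x. shifted_square s c))" for c
      unfolding F_def shifted_square_def using g gM by (intro state_real_weighted_le) auto
    have "g x *\<^sub>R s = (1/4) *\<^sub>R F 1 x - (1/4) *\<^sub>R F (-1) x
         + ((1/4) *\<^sub>R csm \<i> (F \<i> x) - (1/4) *\<^sub>R csm \<i> (F (-\<i>) x))" for x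
      using arg_cong[where f="\<lambda>y. g x *\<^sub>R y", OF polarization[of s]]
      unfolding F_def by (simp add: csm_diff_right csm_scaleR algebra_simps)
    then have eq: "\<mu> (\<lambda>x. g x *\<^sub>R s) = (1/4) * \<mu> (F 1) - (1/4) * \<mu> (F (-1))
        + ((1/4) * (\<i> * \<mu> (F \<i>)) - (1/4) * (\<i> * \<mu> (F (-\<i>))))"
      using F by (simp add: state_add state_diff state_scaleR state_csm)
    have tri: "cmod (p - q + (r - t)) \<le> cmod p + cmod q + cmod r + cmod t" for p q r t :: complex
      using norm_triangle_ineq[of "p - q" "r - t"] norm_triangle_ineq4[of p q] norm_triangle_ineq4[of r t]
      by linarith
    have "cmod (\<mu> (\<lambda>x. g x *\<^sub>R s))
        \<le> (1/4) * (cmod (\<mu> (F 1)) + cmod (\<mu> (F (-1))) + cmod (\<mu> (F \<i>)) + cmod (\<mu> (F (-\<i>))))"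
      unfolding eq using tri[of "(1/4) * \<mu> (F 1)" "(1/4) * \<mu> (F (-1))"
          "(1/4) * (\<i> * \<mu> (F \<i>))" "(1/4) * (\<i> * \<mu> (F (-\<i>)))"]
      by (simp only: norm_mult norm_ii) simp
    also have "\<dots> \<le> M * K"
      using FB[of 1] FB[of "-1"] FB[of \<i>] FB[of "-\<i>"] unfolding K_def by (simp add: algebra_simps)
    finally show ?thesis .
  qed
  moreover have "K \<ge> 0" unfolding K_def by simp
  ultimately show ?thesis by blast
qed

lemma state_bounded: "\<exists>K\<ge>0. \<forall>c\<in>CXA X. \<forall>M. (\<forall>x\<in>X. norm (c x) \<le> M) \<longrightarrow> cmod (\<mu> c) \<le> K * M"
proof -
  obtain B :: "'a set" where fin: "finite B" and ind: "independent B" and sp: "\<And>x. x \<in> span B"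
    using finite_real_basis by blast
  obtain K where K0: "\<And>b. K b \<ge> 0" and K: "\<And>b g M. continuous_on X g \<Longrightarrow> (\<forall>x\<in>X. \<bar>g x\<bar> \<le> M)
      \<Longrightarrow> cmod (\<mu> (\<lambda>x. g x *\<^sub>R b)) \<le> M * K b"
    using state_weighted_bound by metis
  have "\<forall>b. \<exists>L>0. \<forall>y. \<bar>representation B y b\<bar> \<le> norm y * L"
    using bounded_linear.pos_bounded[OF bounded_linear_representation[OF fin ind sp]] by auto
  then obtain L where L0: "\<And>b. L b > 0" and L: "\<And>b y. \<bar>representation B y b\<bar> \<le> norm y * L b"
    by metis
  show ?thesis
  proof (intro exI[of _ "\<Sum>b\<in>B. L b * K b"] conjI ballI allI impI)
    show "(\<Sum>b\<in>B. L b * K b) \<ge> 0" using L0 K0 by (simp add: sum_nonneg less_imp_le)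
    fix c :: "'x \<Rightarrow> 'a" and M assume c: "c \<in> CXA X" and cM: "\<forall>x\<in>X. norm (c x) \<le> M"
    define g where "g b x = representation B (c x) b" for b x
    have g: "continuous_on X (g b)" for b
      unfolding g_def using c bounded_linear.continuous_on[OF bounded_linear_representation[OF fin ind sp]]
      unfolding CXA_def by blast
    have gM: "\<forall>x\<in>X. \<bar>g b x\<bar> \<le> L b * M" for b
      unfolding g_def using L cM L0 by (metis mult.commute mult_left_mono order_trans less_imp_le)
    have "c = (\<lambda>x. \<Sum>b\<in>B. g b x *\<^sub>R b)"
      unfolding g_def using sum_representation_eq[OF ind sp fin] by auto
    then have "\<mu> c = (\<Sum>b\<in>B. \<mu> (\<lambda>x. g b x *\<^sub>R b))"
      using state_sum[OF fin, of "\<lambda>b x. g b x *\<^sub>R b"] g by simp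
    then have "cmod (\<mu> c) \<le> (\<Sum>b\<in>B. cmod (\<mu> (\<lambda>x. g b x *\<^sub>R b)))" by (simp add: norm_sum)
    also have "\<dots> \<le> (\<Sum>b\<in>B. (L b * M) * K b)" by (intro sum_mono K g gM)
    also have "\<dots> = (\<Sum>b\<in>B. L b * K b) * M" by (simp add: sum_distrib_left sum_distrib_right mult_ac)
    finally show "cmod (\<mu> c) \<le> (\<Sum>b\<in>B. L b * K b) * M" .
  qed
qed

end

section \<open>The seminorms L\<close>

lemma le_enn2real_if_ennreal_le: "ennreal v \<le> L \<Longrightarrow> L \<noteq> top \<Longrightarrow> v \<le> enn2real L"
  by (metis enn2real_ennreal enn2real_nonneg ennreal_enn2real_if ennreal_le_iff linorder_le_cases order_trans)

lemma lip_n_le_dist: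
  assumes N: "is_norm_on n" and fin: "lip_n X n a \<noteq> top" and "x \<in> X" "y \<in> X"
  shows "n (a x - a y) \<le> enn2real (lip_n X n a) * dist x y"
proof (cases "x = y")
  case False
  have "ennreal (n (a x - a y) / dist x y) \<le> lip_n X n a"
    unfolding lip_n_def using assms False by (intro SUP_upper2[of "(x, y)"]) auto
  then have "n (a x - a y) / dist x y \<le> enn2real (lip_n X n a)"
    using fin by (rule le_enn2real_if_ennreal_le)
  then show ?thesis using False by (simp add: pos_divide_le_eq)
qed (simp add: norm_on_zero[OF N])

lemma norm_le_supnorm:
  assumes "supnorm X c \<noteq> top" and "x \<in> X"
  shows "norm (c x) \<le> enn2real (supnorm X c)"
proof -
  have "ennreal (norm (c x)) \<le> supnorm X c" unfolding supnorm_def using assms(2) by (rule SUP_upper)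
  then show ?thesis using assms(1) by (rule le_enn2real_if_ennreal_le)
qed

lemma supnorm_leI: "(\<And>x. x \<in> X \<Longrightarrow> norm (c x) \<le> M) \<Longrightarrow> supnorm X c \<le> ennreal M"
  unfolding supnorm_def by (rule SUP_least) (simp add: ennreal_leI)

lemma lip_n_le_mult:
  assumes N: "is_norm_on n" and "K \<ge> 0" and K: "\<And>v. m v \<le> K * n v"
  shows "lip_n X m a \<le> ennreal K * lip_n X n a"
  unfolding lip_n_def
proof (rule SUP_least, clarify)
  fix x y assume xy: "x \<in> X" "y \<in> X" "x \<noteq> y"
  have "ennreal (m (a x - a y) / dist x y) \<le> ennreal K * ennreal (n (a x - a y) / dist x y)"
    using K[of "a x - a y"] xy \<open>K \<ge> 0\<close> norm_on_nonneg[OF N]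
    by (simp add: ennreal_mult[symmetric] ennreal_leI divide_right_mono)
  also have "\<dots> \<le> ennreal K * (SUP (x, y)\<in>{(x, y). x \<in> X \<and> y \<in> X \<and> x \<noteq> y}. ennreal (n (a x - a y) / dist x y))"
    using xy by (intro mult_left_mono SUP_upper2[of "(x, y)"]) auto
  finally show "ennreal (m (a x - a y) / dist x y) \<le> \<dots>" .
qed

lemma ennreal_le_mult_max_INF:
  fixes Y L :: ennreal
  assumes c: "c > 0" and h: "\<And>b. b \<in> S \<Longrightarrow> Y \<le> ennreal c * max L (s b)"
  shows "Y \<le> ennreal c * max L (INF b\<in>S. s b)"
proof (cases "Y \<le> ennreal c * L")
  case True
  then show ?thesis by (rule order.trans) (intro mult_left_mono; simp)
next
  case False
  then have Ys: "Y \<le> ennreal c * s b" if "b \<in> S" for b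
    using h[OF that] by (auto simp: max_def split: if_splits)
  then have "ennreal (1 / c) * Y \<le> s b" if "b \<in> S" for b
    using mult_left_mono[OF Ys[OF that], of "ennreal (1 / c)"] c
    by (simp add: ennreal_mult[symmetric] mult.assoc[symmetric])
  then have "ennreal c * (ennreal (1 / c) * Y) \<le> ennreal c * (INF b\<in>S. s b)"
    by (intro mult_left_mono INF_greatest) auto
  then have "Y \<le> ennreal c * (INF b\<in>S. s b)"
    using c by (simp add: ennreal_mult[symmetric] mult.assoc[symmetric])
  then show ?thesis by (rule order.trans) (intro mult_left_mono; simp)
qed

lemma ennreal_le_mult_max_finite:
  fixes Y L S :: ennreal
  assumes c: "c > 0"
    and fin: "\<And>l d. L = ennreal l \<Longrightarrow> S = ennreal d \<Longrightarrow> 0 \<le> l \<Longrightarrow> 0 \<le> d \<Longrightarrow> Y \<le> ennreal (c * max l d)"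
  shows "Y \<le> ennreal c * max L S"
proof (cases "L = top \<or> S = top")
  case True
  then show ?thesis using c by (auto simp: max_def top_unique ennreal_mult_top)
next
  case False
  then obtain l d where "L = ennreal l" "S = ennreal d" "0 \<le> l" "0 \<le> d"
    by (cases L rule: ennreal_cases; cases S rule: ennreal_cases) auto
  then show ?thesis
    using fin[of l d] c by (simp add: ennreal_mult max_def split: if_splits)
qed

lemma ennreal_inverse_mult_le:
  fixes Y Z :: ennreal
  assumes "Y \<le> ennreal C * Z" and "C > 0"
  shows "ennreal (1 / C) * Y \<le> Z"
proof -
  have "ennreal (1 / C) * Y \<le> ennreal (1 / C) * (ennreal C * Z)" using assms(1) by (rule mult_left_mono) simp
  also have "\<dots> = Z" using assms(2) by (simp add: ennreal_mult[symmetric] mult.assoc[symmetric])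
  finally show ?thesis .
qed

lemma lip_n_scaleR_one:
  fixes f :: "'x::metric_space \<Rightarrow> real"
  assumes N: "is_norm_on n"
  shows "lip_n X n (\<lambda>x. f x *\<^sub>R (1::'a::real_normed_algebra_1))
    = ennreal (n 1) * lip_scalar X (\<lambda>x. complex_of_real (f x))"
proof -
  have "ennreal (n (f x *\<^sub>R (1::'a) - f y *\<^sub>R 1) / dist x y)
      = ennreal (n 1) * ennreal (cmod (complex_of_real (f x) - complex_of_real (f y)) / dist x y)" for x y
    using norm_on_scaleR[OF N, of "f x - f y" 1] norm_on_nonneg[OF N, of 1]
    by (simp add: scaleR_diff_left ennreal_mult[symmetric] mult.commute flip: of_real_diff)
  then show ?thesis
    unfolding lip_n_def lip_scalar_def SUP_mult_left_ennreal by (auto intro: SUP_cong)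
qed

definition scalar_dist :: "'x::metric_space set \<Rightarrow> (complex \<Rightarrow> 'a::real_normed_algebra_1 \<Rightarrow> 'a)
     \<Rightarrow> (('x \<Rightarrow> 'a) \<Rightarrow> complex) \<Rightarrow> qchoice \<Rightarrow> ('x \<Rightarrow> 'a) \<Rightarrow> ennreal" where
  "scalar_dist X csm \<mu> q a = (case q of
        Q_CX \<Rightarrow> (INF b\<in>CX_scalar X csm. supnorm X (\<lambda>x. a x - b x))
      | Q_C \<Rightarrow> (INF z. supnorm X (\<lambda>x. a x - csm z 1))
      | Q_mu \<Rightarrow> supnorm X (\<lambda>x. a x - csm (\<mu> a) 1))"

lemma Lq_eq_max: "Lq X csm \<mu> n q a = max (lip_n X n a) (scalar_dist X csm \<mu> q a)"
  unfolding Lq_def scalar_dist_def ..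

lemma const_in_CX_scalar: "(\<lambda>x. csm z 1) \<in> CX_scalar X csm"
  unfolding CX_scalar_def by auto

lemma scalar_dist_le_Q_mu: "scalar_dist X csm \<mu> q a \<le> scalar_dist X csm \<mu> Q_mu a"
  by (cases q) (auto simp: scalar_dist_def intro: INF_lower2[OF const_in_CX_scalar] INF_lower2)

lemma scalar_dist_Q_CX_le: "scalar_dist X csm \<mu> Q_CX a \<le> scalar_dist X csm \<mu> q a"
  by (cases q) (auto simp: scalar_dist_def intro!: INF_mono intro: const_in_CX_scalar INF_lower2[OF const_in_CX_scalar])

context cx_state
begin

lemma state_recentre_bound:
  "\<exists>K>0. \<forall>a\<in>CXA X. \<forall>z r. (\<forall>y\<in>X. norm (a y - csm z 1) \<le> r) \<longrightarrow>
     (\<forall>x\<in>X. norm (a x - csm (\<mu> a) 1) \<le> K * r)"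
proof -
  obtain K where "K \<ge> 0" and K: "\<And>c M. c \<in> CXA X \<Longrightarrow> \<forall>x\<in>X. norm (c x) \<le> M \<Longrightarrow> cmod (\<mu> c) \<le> K * M"
    using state_bounded by blast
  have "norm (a x - csm (\<mu> a) 1) \<le> (1 + K) * r"
    if a: "a \<in> CXA X" and r: "\<forall>y\<in>X. norm (a y - csm z 1) \<le> r" and x: "x \<in> X" for a z r x
  proof -
    have "\<mu> a - z = \<mu> (\<lambda>y. a y - csm z 1)" using state_diff[OF a] state_const_scalar by simp
    then have "cmod (\<mu> a - z) \<le> K * r" using K[of "\<lambda>y. a y - csm z 1" r] a r by simp
    moreover have "norm (a x - csm (\<mu> a) 1) \<le> norm (a x - csm z 1) + norm (csm z 1 - csm (\<mu> a) 1)"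
      by (rule norm_diff_triangle_le[OF order.refl order.refl])
    moreover have "norm (csm z 1 - csm (\<mu> a) 1) = cmod (\<mu> a - z)"
      by (simp add: norm_csm_one_diff norm_minus_commute)
    ultimately show ?thesis using r x by (auto simp: distrib_right)
  qed
  then show ?thesis using \<open>K \<ge> 0\<close> by (intro exI[of _ "1 + K"]) auto
qed

lemma scalar_dist_Q_mu_le:
  assumes "compact X" and N: "is_norm_on n"
  shows "\<exists>C>0. \<forall>a\<in>CXA X.
    scalar_dist X csm \<mu> Q_mu a \<le> ennreal C * max (lip_n X n a) (scalar_dist X csm \<mu> Q_CX a)"
proof -
  obtain K where "K > 0" and K: "\<And>a z r. a \<in> CXA X \<Longrightarrow> \<forall>y\<in>X. norm (a y - csm z 1) \<le> r
      \<Longrightarrow> \<forall>x\<in>X. norm (a x - csm (\<mu> a) 1) \<le> K * r"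
    using state_recentre_bound by blast
  obtain Kn where "Kn > 0" and Kn: "\<And>v. norm v \<le> Kn * n v"
    using norms_equivalent[OF is_norm_on_norm N] by blast
  obtain x\<^sub>0 where x\<^sub>0: "x\<^sub>0 \<in> X" using domain_nonempty by blast
  obtain D where D: "\<And>x y. x \<in> X \<Longrightarrow> y \<in> X \<Longrightarrow> dist x y \<le> D"
    using compact_imp_bounded[OF \<open>compact X\<close>] unfolding bounded_two_points by blast
  have "D \<ge> 0" using D[OF x\<^sub>0 x\<^sub>0] by simp
  define C where "C = K * (1 + Kn * D)"
  have "C > 0" unfolding C_def using \<open>K > 0\<close> \<open>Kn > 0\<close> \<open>D \<ge> 0\<close> by (simp add: add_pos_nonneg)
  have "supnorm X (\<lambda>x. a x - csm (\<mu> a) 1) \<le> ennreal C * max (lip_n X n a) (supnorm X (\<lambda>x. a x - b x))"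
    if a: "a \<in> CXA X" and b: "b \<in> CX_scalar X csm" for a b
  proof (rule ennreal_le_mult_max_finite[OF \<open>C > 0\<close>])
    fix l d assume l: "lip_n X n a = ennreal l" and d: "supnorm X (\<lambda>x. a x - b x) = ennreal d"
      and "0 \<le> l" "0 \<le> d"
    obtain z where z: "b x\<^sub>0 = csm z 1" using b x\<^sub>0 unfolding CX_scalar_def by auto
    have "norm (a y - csm z 1) \<le> (1 + Kn * D) * max l d" if y: "y \<in> X" for y
    proof -
      have "n (a y - a x\<^sub>0) \<le> l * dist y x\<^sub>0"
        using lip_n_le_dist[OF N _ y x\<^sub>0, of a] l \<open>0 \<le> l\<close> by simp
      also have "\<dots> \<le> l * D" using D[OF y x\<^sub>0] \<open>0 \<le> l\<close> by (rule mult_left_mono)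
      finally have "norm (a y - a x\<^sub>0) \<le> Kn * (l * D)"
        using Kn[of "a y - a x\<^sub>0"] \<open>Kn > 0\<close> by (meson mult_left_mono less_imp_le order_trans)
      moreover have "norm (a x\<^sub>0 - b x\<^sub>0) \<le> d" using norm_le_supnorm[of X "\<lambda>x. a x - b x" x\<^sub>0] d x\<^sub>0 \<open>0 \<le> d\<close> by simp
      moreover have "Kn * (l * D) \<le> Kn * D * max l d"
        using \<open>Kn > 0\<close> \<open>D \<ge> 0\<close> mult_left_mono[of l "max l d" "Kn * D"] by (simp add: mult_ac)
      ultimately have "norm (a y - csm z 1) \<le> Kn * D * max l d + max l d"
        using norm_triangle_ineq[of "a y - a x\<^sub>0" "a x\<^sub>0 - b x\<^sub>0"] z by simp
      then show ?thesis by (simp add: distrib_right)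
    qed
    then have "\<forall>x\<in>X. norm (a x - csm (\<mu> a) 1) \<le> K * ((1 + Kn * D) * max l d)"
      by (intro K[OF a]) blast
    then have "\<forall>x\<in>X. norm (a x - csm (\<mu> a) 1) \<le> C * max l d"
      unfolding C_def by (simp add: mult.assoc)
    then show "supnorm X (\<lambda>x. a x - csm (\<mu> a) 1) \<le> ennreal (C * max l d)"
      by (intro supnorm_leI) auto
  qed
  then show ?thesis
    using \<open>C > 0\<close> unfolding scalar_dist_def qchoice.case
    by (intro exI[of _ C] conjI ballI ennreal_le_mult_max_INF) auto
qed

lemma Lq_le_mult_Lq:
  assumes "compact X" and N: "is_norm_on n" and M: "is_norm_on m"
  shows "\<exists>C>0. \<forall>a\<in>CXA X. Lq X csm \<mu> m p a \<le> ennreal C * Lq X csm \<mu> n q a"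
proof -
  obtain K where "K > 0" and K: "\<And>v. m v \<le> K * n v"
    using norms_equivalent[OF M N] by blast
  obtain C where "C > 0" and C: "\<And>a. a \<in> CXA X \<Longrightarrow> scalar_dist X csm \<mu> Q_mu a
      \<le> ennreal C * max (lip_n X n a) (scalar_dist X csm \<mu> Q_CX a)"
    using scalar_dist_Q_mu_le[OF assms(1) N] by blast
  have "Lq X csm \<mu> m p a \<le> ennreal (K + C) * Lq X csm \<mu> n q a" if a: "a \<in> CXA X" for a
  proof -
    have KC: "ennreal K \<le> ennreal (K + C)" "ennreal C \<le> ennreal (K + C)"
      using \<open>K > 0\<close> \<open>C > 0\<close> by (auto intro: ennreal_leI)
    have "lip_n X m a \<le> ennreal K * lip_n X n a"
      using \<open>K > 0\<close> K by (intro lip_n_le_mult[OF N]) auto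
    also have "\<dots> \<le> ennreal (K + C) * Lq X csm \<mu> n q a"
      unfolding Lq_eq_max using KC by (intro mult_mono) auto
    finally have lip: "lip_n X m a \<le> ennreal (K + C) * Lq X csm \<mu> n q a" .
    have "scalar_dist X csm \<mu> p a \<le> scalar_dist X csm \<mu> Q_mu a" by (rule scalar_dist_le_Q_mu)
    also have "\<dots> \<le> ennreal C * max (lip_n X n a) (scalar_dist X csm \<mu> Q_CX a)" by (rule C[OF a])
    also have "\<dots> \<le> ennreal (K + C) * Lq X csm \<mu> n q a"
      unfolding Lq_eq_max using KC scalar_dist_Q_CX_le[of X csm \<mu> a q]
      by (intro mult_mono) (auto simp: max_def)
    finally show ?thesis using lip unfolding Lq_eq_max[of X csm \<mu> m] by simp
  qed
  then show ?thesis using \<open>K > 0\<close> \<open>C > 0\<close> by (intro exI[of _ "K + C"]) auto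
qed

lemma Lq_equivalent:
  assumes "compact X" and "is_norm_on n" and "is_norm_on m"
  shows "\<exists>c C. c > 0 \<and> C > 0 \<and> (\<forall>a\<in>CXA X.
    ennreal c * Lq X csm \<mu> n q a \<le> Lq X csm \<mu> m p a \<and> Lq X csm \<mu> m p a \<le> ennreal C * Lq X csm \<mu> n q a)"
proof -
  obtain C where "C > 0" and C: "\<forall>a\<in>CXA X. Lq X csm \<mu> m p a \<le> ennreal C * Lq X csm \<mu> n q a"
    using Lq_le_mult_Lq[OF assms] by blast
  obtain C' where "C' > 0" and C': "\<forall>a\<in>CXA X. Lq X csm \<mu> n q a \<le> ennreal C' * Lq X csm \<mu> m p a"
    using Lq_le_mult_Lq[OF assms(1,3,2)] by blast
  have "ennreal (1 / C') * Lq X csm \<mu> n q a \<le> Lq X csm \<mu> m p a" if "a \<in> CXA X" for a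
    using C'[rule_format, OF that] \<open>C' > 0\<close> by (rule ennreal_inverse_mult_le)
  then show ?thesis using C \<open>C > 0\<close> \<open>C' > 0\<close> by (intro exI[of _ "1 / C'"] exI[of _ C]) auto
qed

lemma Lq_cmap_bi_lipschitz:
  assumes "compact X" and N: "is_norm_on n"
  shows "\<exists>c C. c > 0 \<and> C > 0 \<and> (\<forall>f::'x \<Rightarrow> real. continuous_on X f \<longrightarrow>
    ennreal c * lip_scalar X (\<lambda>x. complex_of_real (f x)) \<le> Lq X csm \<mu> n q (cmap csm (\<lambda>x. complex_of_real (f x))) \<and>
    Lq X csm \<mu> n q (cmap csm (\<lambda>x. complex_of_real (f x))) \<le> ennreal C * lip_scalar X (\<lambda>x. complex_of_real (f x)))"
proof -
  obtain C where "C > 0" and C: "\<forall>a\<in>CXA X. Lq X csm \<mu> n q a \<le> ennreal C * Lq X csm \<mu> n Q_CX a"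
    using Lq_le_mult_Lq[OF assms(1) N N] by blast
  have "n 1 > 0" using norm_on_nonneg[OF N, of 1] norm_on_eq_zero_iff[OF N, of 1] by (simp add: order_less_le)
  have "ennreal (n 1) * lip_scalar X (\<lambda>x. complex_of_real (f x)) \<le> Lq X csm \<mu> n q (cmap csm (\<lambda>x. complex_of_real (f x)))
    \<and> Lq X csm \<mu> n q (cmap csm (\<lambda>x. complex_of_real (f x)))
        \<le> ennreal (C * n 1) * lip_scalar X (\<lambda>x. complex_of_real (f x))"
    if f: "continuous_on X f" for f :: "'x \<Rightarrow> real"
  proof -
    define a where "a = cmap csm (\<lambda>x. complex_of_real (f x))"
    have a: "a = (\<lambda>x. f x *\<^sub>R 1)" unfolding a_def cmap_def by (simp add: csm_of_real)
    have aC: "a \<in> CXA X" unfolding a using f by simp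
    moreover have "a x \<in> range (\<lambda>z. csm z 1)" for x unfolding a_def cmap_def by blast
    ultimately have "a \<in> CX_scalar X csm" unfolding CX_scalar_def by blast
    then have "scalar_dist X csm \<mu> Q_CX a \<le> supnorm X (\<lambda>x. a x - a x)"
      unfolding scalar_dist_def qchoice.case by (rule INF_lower)
    also have "\<dots> = 0" unfolding supnorm_def by (simp add: SUP_constant bot_ennreal)
    finally have "scalar_dist X csm \<mu> Q_CX a = 0" by simp
    then have LCX: "Lq X csm \<mu> n Q_CX a = lip_n X n a" unfolding Lq_eq_max by simp
    have lip: "lip_n X n a = ennreal (n 1) * lip_scalar X (\<lambda>x. complex_of_real (f x))"
      unfolding a by (rule lip_n_scaleR_one[OF N])
    show ?thesis
      unfolding a_def[symmetric]
    proof
      show "ennreal (n 1) * lip_scalar X (\<lambda>x. complex_of_real (f x)) \<le> Lq X csm \<mu> n q a"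
        unfolding lip[symmetric] Lq_eq_max by simp
      have "Lq X csm \<mu> n q a \<le> ennreal C * Lq X csm \<mu> n Q_CX a" using C aC by blast
      also have "\<dots> = ennreal (C * n 1) * lip_scalar X (\<lambda>x. complex_of_real (f x))"
        unfolding LCX lip using \<open>C > 0\<close> \<open>n 1 > 0\<close> by (simp add: ennreal_mult mult.assoc)
      finally show "Lq X csm \<mu> n q a \<le> ennreal (C * n 1) * lip_scalar X (\<lambda>x. complex_of_real (f x))" .
    qed
  qed
  then show ?thesis using \<open>C > 0\<close> \<open>n 1 > 0\<close> by (intro exI[of _ "n 1"] exI[of _ "C * n 1"]) auto
qed

end

theorem proposition2p15:
  fixes X :: "'x::metric_space set"
    and csm :: "complex \<Rightarrow> 'a::real_normed_algebra_1 \<Rightarrow> 'a"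
    and st :: "'a \<Rightarrow> 'a"
    and \<mu> :: "('x \<Rightarrow> 'a) \<Rightarrow> complex"
    and n m :: "'a \<Rightarrow> real"
  assumes "compact X"
    and "fd_cstar_algebra csm st"
    and "is_state X csm st \<mu>"
    and "is_norm_on n" and "is_norm_on m"
  shows "(\<forall>q p. \<exists>c C. c > 0 \<and> C > 0 \<and>
            (\<forall>a\<in>CXA X. self_adjoint_fun X st a \<longrightarrow>
               ennreal c * Lq X csm \<mu> n q a \<le> Lq X csm \<mu> m p a \<and>
               Lq X csm \<mu> m p a \<le> ennreal C * Lq X csm \<mu> n q a))
       \<and> (\<forall>q. \<exists>c' C'. c' > 0 \<and> C' > 0 \<and>
            (\<forall>f::'x \<Rightarrow> real. continuous_on X f \<longrightarrow>
               ennreal c' * lip_scalar X (\<lambda>x. complex_of_real (f x))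
                 \<le> Lq X csm \<mu> n q (cmap csm (\<lambda>x. complex_of_real (f x))) \<and>
               Lq X csm \<mu> n q (cmap csm (\<lambda>x. complex_of_real (f x)))
                 \<le> ennreal C' * lip_scalar X (\<lambda>x. complex_of_real (f x))))"
proof -
  interpret cx_state csm st X \<mu>
    by unfold_locales (fact assms)+
  \<comment> \<open>The equivalence holds on all of C(X,A).\<close>
  show ?thesis
    using Lq_equivalent[OF assms(1,4,5)] Lq_cmap_bi_lipschitz[OF assms(1,4)] by blast
qed

end
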